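(* Let $G$ be an infinite simple undirected graph with finite chromatic number $\chi(G)$. Then there is a minor $M$ of $G$ such that $M\not\cong G$ and $\chi(M)=\chi(G)$.
   Context: Graphs are simple and undirected: $G=(V,E)$ with $E \subseteq \{\{x,y\}: x,y\in V,\ x\neq y\}$. $\chi(G)$ denotes the chromatic number of $G$, i.e. the least cardinal $\lambda$ such that there is a graph homomorphism $G \to K_\lambda$; $K_\alpha$ is the complete graph on $\alpha$ vertices. Disjoint sets $S,T\subseteq V(G)$ are connected to each other if there are $s\in S$, $t\in T$ with $\{s,t\}\in E(G)$. For a collection $\mathcal D$ of pairwise disjoint, nonempty subsets of $V(G)$, each inducing a connected subgraph, let $G(\mathcal D)$ be the graph with vertex set $\mathcal D$ in which distinct $d,e\in\mathcal D$ are adjacent iff $d$ and $e$ are connected to each other. A graph $M$ is a minor of $G$ if there is such a collection $\mathcal D$ and an injective graph homomorphism $M \to G(\mathcal D)$. *)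

theory Defs
  imports Main
begin

type_synonym 'a graph = "'a set \<times> 'a set set"

definition verts :: "'a graph \<Rightarrow> 'a set" where "verts G = fst G"
definition edges :: "'a graph \<Rightarrow> 'a set set" where "edges G = snd G"

definition simple_graph :: "'a graph \<Rightarrow> bool" where
  "simple_graph G \<longleftrightarrow> edges G \<subseteq> {{x, y} | x y. x \<in> verts G \<and> y \<in> verts G \<and> x \<noteq> y}"

definition colourable :: "'a graph \<Rightarrow> nat \<Rightarrow> bool" where
  "colourable G k \<longleftrightarrow> (\<exists>f. f ` verts G \<subseteq> {..<k} \<and>
      (\<forall>x y. {x, y} \<in> edges G \<longrightarrow> f x \<noteq> f y))"

text \<open>Chromatic number, meaningful when it is finite.\<close>
definition finite_chromatic :: "'a graph \<Rightarrow> bool" where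
  "finite_chromatic G \<longleftrightarrow> (\<exists>k. colourable G k)"

definition chromatic_number :: "'a graph \<Rightarrow> nat" where
  "chromatic_number G = (LEAST k. colourable G k)"

definition induces_connected :: "'a graph \<Rightarrow> 'a set \<Rightarrow> bool" where
  "induces_connected G S \<longleftrightarrow> S \<subseteq> verts G \<and>
     (\<forall>x\<in>S. \<forall>y\<in>S. (x, y) \<in> ({(u, v). u \<in> S \<and> v \<in> S \<and> {u, v} \<in> edges G})\<^sup>*)"

definition connected_to :: "'a graph \<Rightarrow> 'a set \<Rightarrow> 'a set \<Rightarrow> bool" where
  "connected_to G S T \<longleftrightarrow> (\<exists>s\<in>S. \<exists>t\<in>T. {s, t} \<in> edges G)"

definition branch_sets :: "'a graph \<Rightarrow> 'a set set \<Rightarrow> bool" where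
  "branch_sets G D \<longleftrightarrow> (\<forall>d\<in>D. d \<noteq> {} \<and> induces_connected G d) \<and>
     (\<forall>d\<in>D. \<forall>e\<in>D. d \<noteq> e \<longrightarrow> d \<inter> e = {})"

definition contract :: "'a graph \<Rightarrow> 'a set set \<Rightarrow> 'a set graph" where
  "contract G D = (D, {{d, e} | d e. d \<in> D \<and> e \<in> D \<and> d \<noteq> e \<and> connected_to G d e})"

definition graph_hom :: "'b graph \<Rightarrow> 'c graph \<Rightarrow> ('b \<Rightarrow> 'c) \<Rightarrow> bool" where
  "graph_hom M H h \<longleftrightarrow> h ` verts M \<subseteq> verts H \<and>
     (\<forall>x y. {x, y} \<in> edges M \<longrightarrow> {h x, h y} \<in> edges H)"

definition is_minor :: "'b graph \<Rightarrow> 'a graph \<Rightarrow> bool" where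
  "is_minor M G \<longleftrightarrow> (\<exists>D h. branch_sets G D \<and> inj_on h (verts M) \<and> graph_hom M (contract G D) h)"

definition graph_iso :: "'b graph \<Rightarrow> 'a graph \<Rightarrow> bool" where
  "graph_iso M G \<longleftrightarrow> (\<exists>h. bij_betw h (verts M) (verts G) \<and>
     (\<forall>x\<in>verts M. \<forall>y\<in>verts M. {x, y} \<in> edges M \<longleftrightarrow> {h x, h y} \<in> edges G))"

end

theory Submission
  imports Defs "HOL-Analysis.Function_Topology"
begin

text \<open>
  By the de Bruijn--Erdos theorem, a graph with chromatic number \<open>k\<close> has a finite induced
  subgraph that is not \<open>(k - 1)\<close>-colourable, so this subgraph also has chromatic number \<open>k\<close>.
  Every induced subgraph is a minor (take singletons as branch sets), and a finite graph cannot
  be isomorphic to the infinite graph \<open>G\<close>.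
\<close>

definition induced_subgraph :: "'a graph \<Rightarrow> 'a set \<Rightarrow> 'a graph" where
  "induced_subgraph G S = (S, {e \<in> edges G. e \<subseteq> S})"

text \<open>An isomorphic copy of \<open>H\<close> on singleton vertices, of the same type as contractions.\<close>
definition singleton_graph :: "'a graph \<Rightarrow> 'a set graph" where
  "singleton_graph H = ((\<lambda>v. {v}) ` verts H, (\<lambda>e. (\<lambda>v. {v}) ` e) ` edges H)"

lemma verts_induced_subgraph [simp]: "verts (induced_subgraph G S) = S"
  and edges_induced_subgraph [simp]: "edges (induced_subgraph G S) = {e \<in> edges G. e \<subseteq> S}"
  by (simp_all add: induced_subgraph_def verts_def edges_def)

lemma verts_singleton_graph [simp]: "verts (singleton_graph H) = (\<lambda>v. {v}) ` verts H"
  and edges_singleton_graph [simp]: "edges (singleton_graph H) = (\<lambda>e. (\<lambda>v. {v}) ` e) ` edges H"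
  by (simp_all add: singleton_graph_def verts_def edges_def)

lemma verts_contract [simp]: "verts (contract G D) = D"
  and edges_contract [simp]:
    "edges (contract G D) = {{d, e} |d e. d \<in> D \<and> e \<in> D \<and> d \<noteq> e \<and> connected_to G d e}"
  by (simp_all add: contract_def verts_def edges_def)

lemma simple_graph_edgeD:
  assumes "simple_graph G" "{x, y} \<in> edges G"
  shows "x \<in> verts G" "y \<in> verts G" "x \<noteq> y"
  using assms unfolding simple_graph_def by (auto simp: doubleton_eq_iff)

lemma singleton_graph_edge_iff:
  "{X, Y} \<in> edges (singleton_graph H) \<longleftrightarrow> (\<exists>x y. X = {x} \<and> Y = {y} \<and> {x, y} \<in> edges H)"
proof
  assume "{X, Y} \<in> edges (singleton_graph H)"
  then obtain e where e: "e \<in> edges H" "{X, Y} = (\<lambda>v. {v}) ` e"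
    by auto
  then have "X \<in> (\<lambda>v. {v}) ` e" "Y \<in> (\<lambda>v. {v}) ` e"
    by blast+
  then obtain x y where xy: "x \<in> e" "y \<in> e" "X = {x}" "Y = {y}"
    by blast
  have "e = {x, y}"
  proof
    show "e \<subseteq> {x, y}"
      using e(2) xy(3,4) by blast
  qed (use xy in blast)
  then show "\<exists>x y. X = {x} \<and> Y = {y} \<and> {x, y} \<in> edges H"
    using e(1) xy(3,4) by blast
next
  assume "\<exists>x y. X = {x} \<and> Y = {y} \<and> {x, y} \<in> edges H"
  then obtain x y where "X = {x}" "Y = {y}" "{x, y} \<in> edges H"
    by blast
  then show "{X, Y} \<in> edges (singleton_graph H)"
    using rev_image_eqI[of "{x, y}" "edges H" "{X, Y}" "\<lambda>e. (\<lambda>v. {v}) ` e"] by simp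
qed

lemma colourable_mono: "colourable G j \<Longrightarrow> j \<le> k \<Longrightarrow> colourable G k"
  unfolding colourable_def by (meson lessThan_subset_iff order_trans)

lemma colourable_chromatic_number: "finite_chromatic G \<Longrightarrow> colourable G (chromatic_number G)"
  unfolding finite_chromatic_def chromatic_number_def by (rule LeastI_ex)

lemma not_colourable_less_chromatic_number: "j < chromatic_number G \<Longrightarrow> \<not> colourable G j"
  unfolding chromatic_number_def by (rule not_less_Least)

lemma chromatic_number_eqI:
  assumes "colourable G k" "\<And>j. j < k \<Longrightarrow> \<not> colourable G j"
  shows "chromatic_number G = k"
  unfolding chromatic_number_def using assms leI by (intro Least_equality) blast+

lemma colourable_induced_subgraph_iff:
  "colourable (induced_subgraph G S) k \<longleftrightarrow>
     (\<exists>f. f ` S \<subseteq> {..<k} \<and> (\<forall>x\<in>S. \<forall>y\<in>S. {x, y} \<in> edges G \<longrightarrow> f x \<noteq> f y))"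
  unfolding colourable_def by auto

lemma colourable_induced_subgraph:
  assumes "colourable G k" "S \<subseteq> verts G"
  shows "colourable (induced_subgraph G S) k"
proof -
  obtain f where "f ` verts G \<subseteq> {..<k}" "\<forall>x y. {x, y} \<in> edges G \<longrightarrow> f x \<noteq> f y"
    using assms(1) unfolding colourable_def by blast
  with assms(2) show ?thesis
    unfolding colourable_def by (intro exI[of _ f]) auto
qed

lemma colourable_singleton_graph_iff: "colourable (singleton_graph H) k \<longleftrightarrow> colourable H k"
proof
  assume "colourable (singleton_graph H) k"
  then obtain g where g: "g ` verts (singleton_graph H) \<subseteq> {..<k}"
      "\<forall>X Y. {X, Y} \<in> edges (singleton_graph H) \<longrightarrow> g X \<noteq> g Y"
    unfolding colourable_def by blast
  show "colourable H k"
    unfolding colourable_def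
  proof (intro exI conjI allI impI)
    show "(\<lambda>v. g {v}) ` verts H \<subseteq> {..<k}"
      using g(1) by auto
    show "g {x} \<noteq> g {y}" if "{x, y} \<in> edges H" for x y
      using that g(2) singleton_graph_edge_iff by blast
  qed
next
  assume "colourable H k"
  then obtain f where f: "f ` verts H \<subseteq> {..<k}" "\<forall>x y. {x, y} \<in> edges H \<longrightarrow> f x \<noteq> f y"
    unfolding colourable_def by blast
  show "colourable (singleton_graph H) k"
    unfolding colourable_def
  proof (intro exI conjI allI impI)
    show "(\<lambda>X. f (the_elem X)) ` verts (singleton_graph H) \<subseteq> {..<k}"
      using f(1) by auto
    show "f (the_elem X) \<noteq> f (the_elem Y)" if "{X, Y} \<in> edges (singleton_graph H)" for X Y
      using that f(2) unfolding singleton_graph_edge_iff by auto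
  qed
qed

lemma closedin_product_discrete_distinct:
  assumes "x \<in> I" "y \<in> I"
  shows "closedin (product_topology (\<lambda>_. discrete_topology K) I) {f \<in> (\<Pi>\<^sub>E i\<in>I. K). f x \<noteq> f y}"
proof -
  let ?X = "product_topology (\<lambda>_. discrete_topology K) I"
  have coord_open: "openin ?X {f \<in> topspace ?X. f i \<in> {c}}" if "i \<in> I" "c \<in> K" for i c
    using openin_continuous_map_preimage[OF continuous_map_product_projection[OF that(1),
          where X = "\<lambda>_. discrete_topology K"], where U = "{c}"] that(2)
    by simp
  have "topspace ?X - {f \<in> (\<Pi>\<^sub>E i\<in>I. K). f x \<noteq> f y} =
      (\<Union>c\<in>K. {f \<in> topspace ?X. f x \<in> {c}} \<inter> {f \<in> topspace ?X. f y \<in> {c}})"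
    using assms by (auto simp: PiE_iff extensional_def)
  also have "openin ?X \<dots>"
    using assms coord_open by (intro openin_Union) auto
  finally show ?thesis
    by (simp add: closedin_def)
qed

lemma finite_edge_set_colouring:
  assumes "simple_graph G" "0 < m"
    and finite_colourable: "\<And>S. finite S \<Longrightarrow> S \<subseteq> verts G \<Longrightarrow> colourable (induced_subgraph G S) m"
    and "finite P" "\<forall>(x, y)\<in>P. {x, y} \<in> edges G"
  shows "\<exists>g\<in>(\<Pi>\<^sub>E v\<in>verts G. {..<m}). \<forall>(x, y)\<in>P. g x \<noteq> g y"
proof -
  define S where "S = fst ` P \<union> snd ` P"
  have "finite S"
    unfolding S_def using \<open>finite P\<close> by simp
  have "S \<subseteq> verts G"
  proof
    fix v assume "v \<in> S"
    then obtain x y where "(x, y) \<in> P" "v = x \<or> v = y"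
      unfolding S_def by force
    then show "v \<in> verts G"
      using assms(5) simple_graph_edgeD[OF assms(1)] by blast
  qed
  then obtain f where f: "f ` S \<subseteq> {..<m}" "\<forall>x\<in>S. \<forall>y\<in>S. {x, y} \<in> edges G \<longrightarrow> f x \<noteq> f y"
    using finite_colourable[OF \<open>finite S\<close> \<open>S \<subseteq> verts G\<close>]
    unfolding colourable_induced_subgraph_iff by blast
  let ?g = "restrict (\<lambda>v. if v \<in> S then f v else 0) (verts G)"
  have "?g \<in> (\<Pi>\<^sub>E v\<in>verts G. {..<m})"
    using f(1) \<open>0 < m\<close> by (auto simp: image_subset_iff)
  moreover have "?g x \<noteq> ?g y" if xy: "(x, y) \<in> P" for x y
  proof -
    have "x \<in> S" "y \<in> S"
      using xy unfolding S_def by force+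
    moreover have "{x, y} \<in> edges G"
      using xy assms(5) by blast
    ultimately show ?thesis
      using f(2) \<open>S \<subseteq> verts G\<close> by auto
  qed
  ultimately show ?thesis
    by blast
qed

text \<open>The proper colourings are the intersection of the closed sets \<open>{f. f x \<noteq> f y}\<close> in the
  compact product space \<open>verts G \<rightarrow> {..<m}\<close>; finite subfamilies have a common point because
  finite induced subgraphs are colourable.\<close>
theorem de_Bruijn_Erdos:
  assumes G: "simple_graph G"
    and finite_colourable: "\<And>S. finite S \<Longrightarrow> S \<subseteq> verts G \<Longrightarrow> colourable (induced_subgraph G S) m"
  shows "colourable G m"
proof (cases "verts G = {}")
  case True
  then have "edges G = {}"
    using G unfolding simple_graph_def by auto
  with True show ?thesis
    unfolding colourable_def by auto
next
  case False
  then obtain v where "v \<in> verts G" by blast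
  then have "0 < m"
    using finite_colourable[of "{v}"] unfolding colourable_def by auto
  define X where "X = product_topology (\<lambda>_. discrete_topology {..<m}) (verts G)"
  define T where "T = (\<Pi>\<^sub>E v\<in>verts G. {..<m})"
  define C where "C = (\<lambda>(x, y). {f \<in> T. f x \<noteq> f y}) ` {(x, y). {x, y} \<in> edges G}"
  have "compact_space X"
    unfolding X_def by (simp add: compact_space_product_topology compact_space_discrete_topology)
  then have "compactin X T"
    unfolding compact_space_def X_def T_def by simp
  moreover have "\<forall>c\<in>C. closedin X c"
  proof
    fix c assume "c \<in> C"
    then obtain x y where "{x, y} \<in> edges G" "c = {f \<in> T. f x \<noteq> f y}"
      unfolding C_def by blast
    with simple_graph_edgeD[OF G] show "closedin X c"
      unfolding X_def T_def by (simp add: closedin_product_discrete_distinct)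
  qed
  moreover have "\<forall>F. finite F \<and> F \<subseteq> C \<longrightarrow> T \<inter> \<Inter>F \<noteq> {}"
  proof (intro allI impI)
    fix F assume F: "finite F \<and> F \<subseteq> C"
    obtain P where P: "P \<subseteq> {(x, y). {x, y} \<in> edges G}" "finite P"
        "F = (\<lambda>(x, y). {f \<in> T. f x \<noteq> f y}) ` P"
      using F finite_subset_image unfolding C_def by (metis (no_types, lifting))
    obtain g where "g \<in> T" "\<forall>(x, y)\<in>P. g x \<noteq> g y"
      using finite_edge_set_colouring[OF G \<open>0 < m\<close> finite_colourable P(2)] P(1)
      unfolding T_def by blast
    with P(3) have "g \<in> T \<inter> \<Inter>F"
      by auto
    then show "T \<inter> \<Inter>F \<noteq> {}"
      by blast
  qed
  ultimately obtain g where g: "g \<in> T" "g \<in> \<Inter>C"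
    unfolding compactin_fip by (metis disjoint_iff)
  show ?thesis
    unfolding colourable_def
  proof (intro exI conjI allI impI)
    show "g ` verts G \<subseteq> {..<m}"
      using g(1) unfolding T_def by auto
    show "g x \<noteq> g y" if "{x, y} \<in> edges G" for x y
      using that g unfolding C_def by blast
  qed
qed

lemma finite_induced_subgraph_same_chromatic_number:
  assumes "simple_graph G" "finite_chromatic G"
  obtains S where "finite S" "S \<subseteq> verts G"
    "chromatic_number (induced_subgraph G S) = chromatic_number G"
proof (cases "chromatic_number G = 0")
  case True
  have "colourable (induced_subgraph G {}) 0"
    by (simp add: colourable_induced_subgraph_iff)
  then have "chromatic_number (induced_subgraph G {}) = 0"
    by (auto intro: chromatic_number_eqI)
  with True that show ?thesis by auto
next
  case False
  let ?k = "chromatic_number G"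
  have "\<not> colourable G (?k - 1)"
    using False by (intro not_colourable_less_chromatic_number) simp
  then obtain S where S: "finite S" "S \<subseteq> verts G" "\<not> colourable (induced_subgraph G S) (?k - 1)"
    using de_Bruijn_Erdos[OF assms(1)] by blast
  have "chromatic_number (induced_subgraph G S) = ?k"
  proof (rule chromatic_number_eqI)
    show "colourable (induced_subgraph G S) ?k"
      using colourable_chromatic_number[OF assms(2)] S(2) by (rule colourable_induced_subgraph)
    show "\<not> colourable (induced_subgraph G S) j" if "j < ?k" for j
    proof -
      have "j \<le> ?k - 1"
        using that by simp
      with S(3) show ?thesis
        using colourable_mono by blast
    qed
  qed
  with S that show ?thesis by blast
qed

lemma simple_graph_singleton_graph:
  assumes "simple_graph H"
  shows "simple_graph (singleton_graph H)"
  unfolding simple_graph_def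
proof
  fix E assume "E \<in> edges (singleton_graph H)"
  then obtain e where "e \<in> edges H" "E = (\<lambda>v. {v}) ` e"
    by auto
  moreover obtain x y where "e = {x, y}" "x \<in> verts H" "y \<in> verts H" "x \<noteq> y"
    using assms \<open>e \<in> edges H\<close> unfolding simple_graph_def by blast
  ultimately have "E = {{x}, {y}}" "{x} \<in> verts (singleton_graph H)" "{y} \<in> verts (singleton_graph H)"
      "{x} \<noteq> {y}"
    by auto
  then show "E \<in> {{X, Y} |X Y. X \<in> verts (singleton_graph H) \<and> Y \<in> verts (singleton_graph H) \<and> X \<noteq> Y}"
    by blast
qed

lemma simple_graph_induced_subgraph:
  assumes "simple_graph G"
  shows "simple_graph (induced_subgraph G S)"
  unfolding simple_graph_def
proof
  fix e assume e: "e \<in> edges (induced_subgraph G S)"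
  then obtain x y where "e = {x, y}" "x \<noteq> y"
    using assms unfolding simple_graph_def by auto
  with e show "e \<in> {{x, y} |x y. x \<in> verts (induced_subgraph G S) \<and> y \<in> verts (induced_subgraph G S) \<and> x \<noteq> y}"
    by auto
qed

lemma is_minor_induced_subgraph:
  assumes G: "simple_graph G" and "S \<subseteq> verts G"
  shows "is_minor (singleton_graph (induced_subgraph G S)) G"
  unfolding is_minor_def
proof (intro exI conjI)
  let ?D = "(\<lambda>v. {v}) ` S"
  show "branch_sets G ?D"
    unfolding branch_sets_def induces_connected_def using \<open>S \<subseteq> verts G\<close> by auto
  show "inj_on id (verts (singleton_graph (induced_subgraph G S)))"
    by simp
  show "graph_hom (singleton_graph (induced_subgraph G S)) (contract G ?D) id"
    unfolding graph_hom_def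
  proof (intro conjI allI impI)
    show "id ` verts (singleton_graph (induced_subgraph G S)) \<subseteq> verts (contract G ?D)"
      by simp
    fix X Y assume "{X, Y} \<in> edges (singleton_graph (induced_subgraph G S))"
    then obtain x y where xy: "X = {x}" "Y = {y}" "{x, y} \<in> edges G" "x \<in> S" "y \<in> S"
      unfolding singleton_graph_edge_iff by auto
    then have "x \<noteq> y" "connected_to G {x} {y}"
      using simple_graph_edgeD[OF G] unfolding connected_to_def by auto
    with xy show "{id X, id Y} \<in> edges (contract G ?D)"
      by auto
  qed
qed

theorem mainTheorem5:
  fixes G :: "'a graph"
  assumes "simple_graph G"
    and "infinite (verts G)"
    and "finite_chromatic G"
  shows "\<exists>M :: 'a set graph. simple_graph M \<and> is_minor M G \<and> \<not> graph_iso M G \<and>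
           finite_chromatic M \<and> chromatic_number M = chromatic_number G"
proof -
  obtain S where S: "finite S" "S \<subseteq> verts G"
    "chromatic_number (induced_subgraph G S) = chromatic_number G"
    using finite_induced_subgraph_same_chromatic_number[OF assms(1,3)] .
  let ?M = "singleton_graph (induced_subgraph G S)"
  have "simple_graph ?M"
    using assms(1) by (intro simple_graph_singleton_graph simple_graph_induced_subgraph)
  moreover have "is_minor ?M G"
    using assms(1) S(2) by (rule is_minor_induced_subgraph)
  moreover have "\<not> graph_iso ?M G"
    using S(1) assms(2) bij_betw_finite unfolding graph_iso_def by fastforce
  moreover have "colourable ?M = colourable (induced_subgraph G S)"
    by (simp add: fun_eq_iff colourable_singleton_graph_iff)
  then have "finite_chromatic ?M" "chromatic_number ?M = chromatic_number G"
    using colourable_induced_subgraph[OF colourable_chromatic_number[OF assms(3)] S(2)] S(3)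
    unfolding finite_chromatic_def chromatic_number_def by auto
  ultimately show ?thesis by blast
qed

end
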